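(* Let $p>2$ be a prime and $m\geq3$ an integer with $\gcd(p,m)=1$. Let $u$ be the multiplicative order of $p$ modulo $2m$. Let $\zeta_4$ and $\zeta_{2m}$ be a primitive $4$-th and a primitive $2m$-th root of unity, respectively, in an algebraic closure of $\mathbb{Z}_p$, let $s$ be an integer with $\gcd(s,m)=1$, and let $\delta$ be the degree of the minimal polynomial of $\zeta_4(\zeta_{2m}^s+\zeta_{2m}^{-s})$ over $\mathbb{Z}_p$. Then: - $\delta=u/2$ if ($p\equiv1\pmod4$, $u$ even, and $p^{u/2}\equiv-1\pmod{2m}$), or ($p\equiv3\pmod4$, $u\equiv0\pmod4$, and $p^{u/2}\equiv-1\pmod{2m}$), or ($p\equiv3\pmod4$, $u\equiv2\pmod4$, and $p^{u/2}\equiv m\pm1\pmod{2m}$); - $\delta=u$ if ($p\equiv1\pmod4$, $u$ even, and $p^{u/2}\not\equiv-1\pmod{2m}$), or ($p\equiv1\pmod4$ and $u$ odd), or ($p\equiv3\pmod4$, $u\equiv0\pmod4$, and $p^{u/2}\not\equiv-1\pmod{2m}$), or ($p\equiv3\pmod4$, $u\equiv2\pmod4$, and $p^{u/2}\not\equiv m\pm1\pmod{2m}$); - $\delta=2u$ if $p\equiv3\pmod4$ and $u$ is odd.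
   Context: $\mathbb{Z}_p$ denotes the field with $p$ elements. (For orientation: the elements $\zeta_4(\zeta_{2m}^s+\zeta_{2m}^{-s})$ with $1\le s\le m$, $\gcd(s,m)=1$, are the roots of the reduction modulo $p$ of the fibotomic polynomial $\Psi_m(x)=\prod_{1\le s\le m,\ \gcd(s,m)=1}(x-2i\cos(\pi s/m))$.) *)

theory Defs
  imports "HOL-Number_Theory.Number_Theory" "HOL-Computational_Algebra.Polynomial"
begin

definition prim_root_unity :: "nat \<Rightarrow> 'a::field \<Rightarrow> bool" where
  "prim_root_unity k z \<longleftrightarrow> z ^ k = 1 \<and> (\<forall>j. 0 < j \<and> j < k \<longrightarrow> z ^ j \<noteq> 1)"

text \<open>Polynomials whose coefficients lie in the prime subfield (the image of the integers).\<close>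
definition prime_field_poly :: "'a::field poly \<Rightarrow> bool" where
  "prime_field_poly q \<longleftrightarrow> (\<forall>i. coeff q i \<in> range (of_int :: int \<Rightarrow> 'a))"

definition min_poly_degree :: "'a::field \<Rightarrow> nat" where
  "min_poly_degree x = (LEAST d. \<exists>q. q \<noteq> 0 \<and> prime_field_poly q \<and> degree q = d \<and> poly q x = 0)"

definition is_alg_closure_of_prime_field :: "'a::field itself \<Rightarrow> bool" where
  "is_alg_closure_of_prime_field _ \<longleftrightarrow>
     (\<forall>q::'a poly. 0 < degree q \<longrightarrow> (\<exists>z. poly q z = 0)) \<and>
     (\<forall>x::'a. \<exists>q. q \<noteq> 0 \<and> prime_field_poly q \<and> poly q x = 0)"

end

theory Submission
  imports Defs
begin

text \<open>
  Write \<open>x = \<zeta>\<^sub>4 (z^s + z^(-s))\<close> with \<open>z = \<zeta>\<^sub>2\<^sub>m\<close>. The roots of the minimal polynomial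
  of \<open>x\<close> over the prime field are its Frobenius conjugates \<open>x^(p^j)\<close>, so its degree is the
  least \<open>d > 0\<close> with \<open>x^(p^d) = x\<close>. For \<open>N = p^d\<close> we have
  \<open>x^(p^d) = \<zeta>\<^sub>4^N (z^(sN) + z^(-sN))\<close>, and since \<open>y + 1/y\<close> determines \<open>y\<close> up to inversion,
  \<open>x\<close> is fixed exactly when \<open>N \<equiv> \<plusminus>1 (mod 2m)\<close> if \<open>N \<equiv> 1 (mod 4)\<close>, and
  \<open>N \<equiv> m \<plusminus> 1 (mod 2m)\<close> if \<open>N \<equiv> 3 (mod 4)\<close>. Each such \<open>N\<close> squares to 1 modulo \<open>2m\<close>, so
  \<open>u\<close> divides \<open>2d\<close>; hence \<open>d\<close> is \<open>u/2\<close>, \<open>u\<close> or \<open>2u\<close>, and the congruence conditions decide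
  which.
\<close>

section \<open>Frobenius and the prime subfield\<close>

lemma of_nat_power_CHAR:
  assumes "prime CHAR('a::comm_semiring_1)"
  shows "(of_nat n :: 'a) ^ CHAR('a) = of_nat n"
  using freshmans_dream_sum[OF assms refl, of "\<lambda>_. 1" "{..<n}"] by simp

lemma of_int_power_CHAR:
  assumes "prime CHAR('a::comm_ring_1)"
  shows "(of_int k :: 'a) ^ CHAR('a) = of_int k"
proof (cases "k \<ge> 0")
  case True
  then show ?thesis using of_nat_power_CHAR[OF assms, of "nat k"] by simp
next
  case False
  then have "k = - int (nat (- k))" by simp
  then show ?thesis
    using of_nat_power_CHAR[OF assms, of "nat (- k)"] minus_power_prime_CHAR[OF refl assms]
    by (metis of_int_minus of_int_of_nat_eq)
qed

lemma diff_power_CHAR_power: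
  fixes a b :: "'a::comm_ring_1"
  assumes "prime CHAR('a)"
  shows "(a - b) ^ (CHAR('a) ^ k) = a ^ (CHAR('a) ^ k) - b ^ (CHAR('a) ^ k)"
  using freshmans_dream'[OF assms refl, of "a - b" b k] by (simp add: algebra_simps)

lemma power_CHAR_power_inj:
  fixes a b :: "'a::field"
  assumes "prime CHAR('a)" and "a ^ (CHAR('a) ^ k) = b ^ (CHAR('a) ^ k)"
  shows "a = b"
  using diff_power_CHAR_power[OF assms(1), of a b k] assms(2) by simp

lemma power_CHAR_eq_self_imp_of_int:
  fixes c :: "'a::field"
  assumes prime: "prime CHAR('a)" and fixed: "c ^ CHAR('a) = c"
  shows "c \<in> range (of_int :: int \<Rightarrow> 'a)"
proof (rule ccontr)
  let ?p = "CHAR('a)"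
  let ?F = "(\<lambda>k. of_nat k :: 'a) ` {..<?p}"
  assume c: "c \<notin> range (of_int :: int \<Rightarrow> 'a)"
  define P :: "'a poly" where "P = monom 1 ?p + [:0, -1:]"
  have "?p \<ge> 2" using prime prime_ge_2_nat by blast
  then have deg: "degree P = ?p" unfolding P_def by (simp add: degree_add_eq_left degree_monom_eq)
  then have "P \<noteq> 0" using \<open>?p \<ge> 2\<close> by auto
  have "insert c ?F \<subseteq> {y. poly P y = 0}"
    using fixed of_nat_power_CHAR[OF prime] by (auto simp: P_def poly_monom)
  then have "card (insert c ?F) \<le> ?p"
    using poly_roots_finite[OF \<open>P \<noteq> 0\<close>] card_poly_roots_bound[OF \<open>P \<noteq> 0\<close>] deg
    by (metis (no_types, lifting) card_mono le_trans)
  moreover have "inj_on (\<lambda>k. of_nat k :: 'a) {..<?p}"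
    by (auto intro!: inj_onI simp: of_nat_eq_iff_cong_CHAR cong_def)
  then have "card ?F = ?p" by (simp add: card_image)
  moreover have "c \<notin> ?F" using c by (metis image_iff of_int_of_nat_eq rangeI)
  ultimately show False by simp
qed

lemma coeff_prod_linear_power_CHAR:
  fixes f :: "'b \<Rightarrow> 'a::field"
  assumes prime: "prime CHAR('a)" and "finite A"
  shows "coeff (\<Prod>i\<in>A. [:- (f i ^ CHAR('a)), 1:]) j = coeff (\<Prod>i\<in>A. [:- f i, 1:]) j ^ CHAR('a)"
  using assms(2)
proof (induction A arbitrary: j rule: finite_induct)
  case empty
  then show ?case using prime prime_gt_0_nat by (cases j) (auto simp: power_0_left)
next
  case (insert a A)
  then show ?case
    by (cases j) (simp_all add: mult_pCons_left power_mult_distrib minus_power_prime_CHAR[OF refl prime]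
        diff_power_CHAR_power[OF prime, of _ _ 1, simplified])
qed

lemma poly_power_CHAR:
  fixes q :: "'a::field poly"
  assumes prime: "prime CHAR('a)" and "prime_field_poly q"
  shows "poly q (y ^ CHAR('a)) = poly q y ^ CHAR('a)"
proof -
  have coeff: "coeff q i ^ CHAR('a) = coeff q i" for i
    using assms(2) of_int_power_CHAR[OF prime] unfolding prime_field_poly_def by (metis rangeE)
  have "poly q y ^ CHAR('a) = (\<Sum>i\<le>degree q. (coeff q i * y ^ i) ^ CHAR('a))"
    unfolding poly_altdef by (rule freshmans_dream_sum[OF prime refl])
  also have "\<dots> = poly q (y ^ CHAR('a))"
    by (simp add: poly_altdef power_mult_distrib coeff flip: power_mult mult.commute)
  finally show ?thesis ..
qed

lemma poly_eq_0_power_CHAR_power: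
  fixes q :: "'a::field poly"
  assumes prime: "prime CHAR('a)" and "prime_field_poly q" and "poly q x = 0"
  shows "poly q (x ^ (CHAR('a) ^ i)) = 0"
proof (induction i)
  case 0
  then show ?case using assms(3) by simp
next
  case (Suc i)
  have "x ^ (CHAR('a) ^ Suc i) = (x ^ (CHAR('a) ^ i)) ^ CHAR('a)"
    by (metis power_Suc2 power_mult)
  then show ?case
    using poly_power_CHAR[OF prime assms(2)] Suc prime_gt_0_nat[OF prime] by simp
qed

lemma inj_on_power_CHAR_power:
  fixes x :: "'a::field"
  assumes prime: "prime CHAR('a)"
    and minimal: "\<And>j. 0 < j \<Longrightarrow> j < d \<Longrightarrow> x ^ (CHAR('a) ^ j) \<noteq> x"
  shows "inj_on (\<lambda>i. x ^ (CHAR('a) ^ i)) {..<d}"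
proof -
  have "i = j" if "i \<le> j" "j < d" "x ^ (CHAR('a) ^ i) = x ^ (CHAR('a) ^ j)" for i j
  proof (rule ccontr)
    assume "i \<noteq> j"
    have "x ^ (CHAR('a) ^ j) = (x ^ (CHAR('a) ^ (j - i))) ^ (CHAR('a) ^ i)"
      using \<open>i \<le> j\<close> by (simp flip: power_mult power_add add: mult.commute)
    then have "x ^ (CHAR('a) ^ (j - i)) = x"
      using power_CHAR_power_inj[OF prime] that(3) by metis
    then show False using minimal[of "j - i"] \<open>i \<le> j\<close> \<open>i \<noteq> j\<close> \<open>j < d\<close> by simp
  qed
  then show ?thesis
    by (intro inj_onI) (metis lessThan_iff nat_le_linear)
qed

lemma min_poly_degree_eq_orbit_length:
  fixes x :: "'a::field"
  assumes prime: "prime CHAR('a)" and "d > 0" and fixed: "x ^ (CHAR('a) ^ d) = x"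
    and minimal: "\<And>j. 0 < j \<Longrightarrow> j < d \<Longrightarrow> x ^ (CHAR('a) ^ j) \<noteq> x"
  shows "min_poly_degree x = d"
  unfolding min_poly_degree_def
proof (rule Least_equality)
  let ?p = "CHAR('a)"
  define g where "g i = [:- (x ^ (?p ^ i)), 1:]" for i
  define Q where "Q = (\<Prod>i<d. g i)"
  have "Q \<noteq> 0" by (simp add: Q_def g_def)
  moreover have "degree Q = d"
    unfolding Q_def g_def by (subst degree_prod_eq_sum_degree) auto
  moreover have "poly Q x = 0"
    using \<open>d > 0\<close> by (auto simp: Q_def g_def poly_prod intro!: bexI[of _ 0])
  moreover have "prime_field_poly Q"
    unfolding prime_field_poly_def
  proof
    fix j
    \<comment> \<open>Frobenius permutes the roots of Q cyclically, so it fixes every coefficient.\<close>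
    have "g 0 * (\<Prod>i<d. g (Suc i)) = Q * g d"
      unfolding Q_def by (metis prod.lessThan_Suc prod.lessThan_Suc_shift)
    moreover have "g d = g 0" "g 0 \<noteq> 0" using fixed by (simp_all add: g_def)
    ultimately have shift: "(\<Prod>i<d. g (Suc i)) = Q" by (simp add: mult.commute)
    have "coeff Q j ^ ?p = coeff (\<Prod>i<d. [:- ((x ^ (?p ^ i)) ^ ?p), 1:]) j"
      by (simp add: Q_def g_def coeff_prod_linear_power_CHAR[OF prime])
    also have "(\<lambda>i. (x ^ (?p ^ i)) ^ ?p) = (\<lambda>i. x ^ (?p ^ Suc i))"
      by (metis power_Suc2 power_mult)
    finally have "coeff Q j ^ ?p = coeff (\<Prod>i<d. g (Suc i)) j"
      by (simp add: g_def)
    then show "coeff Q j \<in> range of_int"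
      using shift power_CHAR_eq_self_imp_of_int[OF prime] by simp
  qed
  ultimately show "\<exists>q. q \<noteq> 0 \<and> prime_field_poly q \<and> degree q = d \<and> poly q x = 0"
    by blast
next
  fix e
  assume "\<exists>q. q \<noteq> 0 \<and> prime_field_poly q \<and> degree q = e \<and> poly q x = 0"
  then obtain q where q: "q \<noteq> 0" "prime_field_poly q" "degree q = e" "poly q x = 0"
    by blast
  have "d = card ((\<lambda>i. x ^ (CHAR('a) ^ i)) ` {..<d})"
    using card_image[OF inj_on_power_CHAR_power[OF prime minimal]] by simp
  also have "\<dots> \<le> card {y. poly q y = 0}"
    using poly_eq_0_power_CHAR_power[OF prime q(2,4)] poly_roots_finite[OF q(1)]
    by (intro card_mono) auto
  also have "\<dots> \<le> e" using card_poly_roots_bound[OF q(1)] q(3) by simp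
  finally show "d \<le> e" .
qed

section \<open>Roots of unity\<close>

lemma prim_root_unity_nonzero:
  fixes z :: "'a::field"
  assumes "prim_root_unity n z" and "n > 0"
  shows "z \<noteq> 0"
  using assms unfolding prim_root_unity_def by (metis power_0_left zero_neq_one not_gr0)

lemma prim_root_unity_powi_eq_1_iff:
  fixes z :: "'a::field"
  assumes root: "prim_root_unity n z" and "n > 0"
  shows "z powi k = 1 \<longleftrightarrow> int n dvd k"
proof -
  have "z ^ n = 1" using root unfolding prim_root_unity_def by blast
  have "z \<noteq> 0" using prim_root_unity_nonzero[OF assms] .
  define q r where "q = k div int n" and "r = k mod int n"
  have k: "k = int n * q + r" and r: "0 \<le> r" "r < int n"
    using \<open>n > 0\<close> by (auto simp: q_def r_def)
  have "z powi k = (z powi int n) powi q * z powi r"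
    unfolding k using \<open>z \<noteq> 0\<close> by (simp add: power_int_add power_int_mult)
  also have "\<dots> = z ^ nat r"
    using \<open>z ^ n = 1\<close> r by (simp add: power_int_nonneg_exp)
  finally have "z powi k = 1 \<longleftrightarrow> nat r = 0"
    using root r unfolding prim_root_unity_def by (metis nat_less_iff neq0_conv power_0)
  then show ?thesis using r by (auto simp: r_def)
qed

lemma prim_root_unity_powi_eq_iff:
  fixes z :: "'a::field"
  assumes root: "prim_root_unity n z" and "n > 0"
  shows "z powi a = z powi b \<longleftrightarrow> int n dvd a - b"
proof -
  have "z \<noteq> 0" using prim_root_unity_nonzero[OF assms] .
  then have "z powi a = z powi b \<longleftrightarrow> z powi (a - b) = 1"
    by (auto simp: power_int_diff)
  then show ?thesis using prim_root_unity_powi_eq_1_iff[OF assms] by simp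
qed

lemma prim_root_unity_power_half:
  fixes z :: "'a::field"
  assumes root: "prim_root_unity (2 * m) z" and "m > 0"
  shows "z ^ m = -1"
proof -
  have "(z ^ m) ^ 2 = 1"
    using root unfolding prim_root_unity_def by (simp add: mult.commute flip: power_mult)
  moreover have "z ^ m \<noteq> 1" using root \<open>m > 0\<close> unfolding prim_root_unity_def by auto
  ultimately show ?thesis by (simp add: power2_eq_1_iff)
qed

lemma prim_root_unity_4_power_odd:
  fixes i :: "'a::field"
  assumes root: "prim_root_unity 4 i" and "odd n"
  shows "i ^ n = (if n mod 4 = 1 then i else - i)"
proof -
  have "i ^ 4 = 1" using root unfolding prim_root_unity_def by blast
  have "i ^ 2 = -1" using prim_root_unity_power_half[of 2 i] root by simp
  have "i ^ n = (i ^ 4) ^ (n div 4) * i ^ (n mod 4)"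
    by (simp flip: power_mult power_add)
  also have "\<dots> = i ^ (n mod 4)" using \<open>i ^ 4 = 1\<close> by simp
  moreover have "n mod 4 = 1 \<or> n mod 4 = 3" using \<open>odd n\<close> by presburger
  ultimately show ?thesis
    using \<open>i ^ 2 = -1\<close> by (auto simp: numeral_3_eq_3 power2_eq_square)
qed

lemma add_inverse_eq_add_inverse_iff:
  fixes y v :: "'a::field"
  assumes "y \<noteq> 0" "v \<noteq> 0"
  shows "y + inverse y = v + inverse v \<longleftrightarrow> y = v \<or> y = inverse v"
proof
  assume "y + inverse y = v + inverse v"
  moreover have "(y - v) * (y * v - 1) = y * v * ((y + inverse y) - (v + inverse v))"
    using assms by (simp add: field_simps)
  ultimately have "y = v \<or> y * v = 1" by simp
  then show "y = v \<or> y = inverse v" using assms by (auto simp: field_simps)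
qed auto

lemma prim_root_unity_powi_sum_eq_iff:
  fixes z :: "'a::field"
  assumes root: "prim_root_unity n z" and "n > 0"
  shows "z powi a + z powi (- a) = z powi b + z powi (- b) \<longleftrightarrow> int n dvd a - b \<or> int n dvd a + b"
proof -
  have "z \<noteq> 0" using prim_root_unity_nonzero[OF assms] .
  then have inv: "z powi (- c) = inverse (z powi c)" "z powi c \<noteq> 0" for c
    by (simp_all add: power_int_minus)
  show ?thesis
    using add_inverse_eq_add_inverse_iff[OF inv(2) inv(2), of a b]
      prim_root_unity_powi_eq_iff[OF assms, of a b] prim_root_unity_powi_eq_iff[OF assms, of a "- b"]
    by (simp add: inv(1))
qed

lemma prim_root_unity_powi_sum_eq_minus_iff:
  fixes z :: "'a::field"
  assumes root: "prim_root_unity (2 * m) z" and "m > 0"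
  shows "z powi a + z powi (- a) = - (z powi b + z powi (- b))
    \<longleftrightarrow> int (2 * m) dvd a - b - int m \<or> int (2 * m) dvd a + b - int m"
proof -
  have "z \<noteq> 0" using prim_root_unity_nonzero[OF root] \<open>m > 0\<close> by simp
  then have "- (z powi b + z powi (- b)) = z powi (b + int m) + z powi (- (b + int m))"
    using prim_root_unity_power_half[OF assms]
    by (simp add: power_int_add power_int_diff algebra_simps)
  then have "z powi a + z powi (- a) = - (z powi b + z powi (- b))
      \<longleftrightarrow> int (2 * m) dvd a - (b + int m) \<or> int (2 * m) dvd a + (b + int m)"
    using prim_root_unity_powi_sum_eq_iff[OF root, of a "b + int m"] \<open>m > 0\<close> by simp
  moreover have "int (2 * m) dvd a + (b + int m) \<longleftrightarrow> int (2 * m) dvd a + b - int m"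
  proof -
    have "a + (b + int m) = (a + b - int m) + int (2 * m)" by simp
    then show ?thesis using dvd_add_left_iff[OF dvd_refl] by metis
  qed
  ultimately show ?thesis by (simp add: diff_diff_eq)
qed

section \<open>The fibotomic root and its Frobenius orbit\<close>

lemma even_coprime_dvd_mult_iff:
  fixes s t M :: int
  assumes "even t" "coprime s M"
  shows "2 * M dvd s * t \<longleftrightarrow> 2 * M dvd t"
proof -
  obtain r where t: "t = 2 * r" using assms(1) by blast
  have "2 * M dvd s * t \<longleftrightarrow> M dvd s * r" unfolding t by (simp add: mult.left_commute)
  also have "\<dots> \<longleftrightarrow> M dvd r" using assms(2) by (simp add: coprime_dvd_mult_right_iff coprime_commute)
  finally show ?thesis unfolding t by simp
qed

lemma even_coprime_dvd_mult_minus_iff: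
  fixes s t M :: int
  assumes "even t" "coprime s M" "M \<noteq> 0"
  shows "2 * M dvd s * t - M \<longleftrightarrow> 2 * M dvd t - M"
proof -
  \<comment> \<open>Either side forces \<open>M dvd t\<close>; for \<open>t = M * w\<close> both then say that \<open>w\<close> is odd,
    because \<open>s\<close> is odd whenever \<open>M\<close> is even.\<close>
  have "M dvd t" if "2 * M dvd s * t - M \<or> 2 * M dvd t - M"
  proof -
    have "M dvd s * t - M \<or> M dvd t - M" using that by (auto dest: dvd_mult_right)
    then have "M dvd s * t" by (metis dvd_diff_commute dvd_add_right_iff diff_add_cancel dvd_refl dvd_mult)
    then show ?thesis using assms(2) by (simp add: coprime_dvd_mult_right_iff coprime_commute)
  qed
  moreover have "2 * M dvd s * t - M \<longleftrightarrow> 2 * M dvd t - M" if t: "t = M * w" for w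
  proof -
    have "2 * M dvd a * (M * w) - M \<longleftrightarrow> odd (a * w)" for a
    proof -
      have "a * (M * w) - M = M * (a * w - 1)" by (simp add: algebra_simps)
      then have "2 * M dvd a * (M * w) - M \<longleftrightarrow> M * 2 dvd M * (a * w - 1)"
        by (simp add: mult.commute)
      also have "\<dots> \<longleftrightarrow> odd (a * w)" using assms(3) by simp
      finally show ?thesis .
    qed
    note odd = this[of s] this[of 1]
    have "odd s" if "odd w"
    proof -
      have "even M" using \<open>even t\<close> t that by simp
      then show ?thesis using coprime_common_divisor[OF assms(2), of 2] by auto
    qed
    then show ?thesis using odd t by auto
  qed
  ultimately show ?thesis by (metis dvdE)
qed

text \<open>The exponents \<open>N\<close> for which \<open>\<zeta>\<^sub>4 \<mapsto> \<zeta>\<^sub>4^N\<close>, \<open>z \<mapsto> z^N\<close> fixes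
  \<open>\<zeta>\<^sub>4 (z^s + z^(-s))\<close> for every \<open>s\<close> coprime to \<open>m\<close>.\<close>

definition fibotomic_fixing_exponent :: "nat \<Rightarrow> int \<Rightarrow> bool" where
  "fibotomic_fixing_exponent m N \<longleftrightarrow>
     (N mod 4 = 1 \<and> ([N = 1] (mod int (2*m)) \<or> [N = -1] (mod int (2*m)))) \<or>
     (N mod 4 = 3 \<and> ([N = int m + 1] (mod int (2*m)) \<or> [N = int m - 1] (mod int (2*m))))"

lemma fibotomic_conjugate_eq_iff:
  fixes i z :: "'a::field" and N :: nat and s :: int
  assumes "odd N" and i: "prim_root_unity 4 i" and z: "prim_root_unity (2*m) z"
    and "m > 0" and "coprime s (int m)"
  shows "i ^ N * (z powi (s * N) + z powi (- (s * N))) = i * (z powi s + z powi (- s))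
    \<longleftrightarrow> fibotomic_fixing_exponent m (int N)"
proof -
  have "i \<noteq> 0" using prim_root_unity_nonzero[OF i] by simp
  have even: "even (int N - 1)" "even (int N + 1)" using \<open>odd N\<close> by auto
  have two_m: "int (2 * m) = 2 * int m" "int m \<noteq> 0" using \<open>m > 0\<close> by simp_all
  have "int N mod 4 = int (N mod 4)" by (simp add: zmod_int)
  show ?thesis
  proof (cases "N mod 4 = 1")
    case True
    then have "i ^ N = i" using prim_root_unity_4_power_odd[OF i \<open>odd N\<close>] by simp
    then have "i ^ N * (z powi (s * N) + z powi (- (s * N))) = i * (z powi s + z powi (- s))
        \<longleftrightarrow> z powi (s * N) + z powi (- (s * N)) = z powi s + z powi (- s)"
      using \<open>i \<noteq> 0\<close> by simp
    also have "\<dots> \<longleftrightarrow> int (2 * m) dvd s * N - s \<or> int (2 * m) dvd s * N + s"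
      using prim_root_unity_powi_sum_eq_iff[OF z] \<open>m > 0\<close> by simp
    also have "\<dots> \<longleftrightarrow> [int N = 1] (mod int (2*m)) \<or> [int N = -1] (mod int (2*m))"
      using even_coprime_dvd_mult_iff[OF even(1) \<open>coprime s (int m)\<close>]
        even_coprime_dvd_mult_iff[OF even(2) \<open>coprime s (int m)\<close>]
      by (simp add: cong_iff_dvd_diff two_m algebra_simps)
    finally show ?thesis
      using True \<open>int N mod 4 = int (N mod 4)\<close> by (simp add: fibotomic_fixing_exponent_def)
  next
    case False
    then have "N mod 4 = 3" using \<open>odd N\<close> by presburger
    then have "i ^ N = - i" using prim_root_unity_4_power_odd[OF i \<open>odd N\<close>] by simp
    then have "i ^ N * (z powi (s * N) + z powi (- (s * N))) = i * (z powi s + z powi (- s))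
        \<longleftrightarrow> i * - (z powi (s * N) + z powi (- (s * N))) = i * (z powi s + z powi (- s))"
      by (simp only: mult_minus_left mult_minus_right)
    also have "\<dots> \<longleftrightarrow> z powi (s * N) + z powi (- (s * N)) = - (z powi s + z powi (- s))"
      using mult_left_cancel[OF \<open>i \<noteq> 0\<close>] minus_equation_iff by metis
    also have "\<dots> \<longleftrightarrow> int (2 * m) dvd s * N - s - int m \<or> int (2 * m) dvd s * N + s - int m"
      by (rule prim_root_unity_powi_sum_eq_minus_iff[OF z \<open>m > 0\<close>])
    also have "\<dots> \<longleftrightarrow> [int N = int m + 1] (mod int (2*m)) \<or> [int N = int m - 1] (mod int (2*m))"
      using even_coprime_dvd_mult_minus_iff[OF even(1) \<open>coprime s (int m)\<close> two_m(2)]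
        even_coprime_dvd_mult_minus_iff[OF even(2) \<open>coprime s (int m)\<close> two_m(2)]
      by (simp add: cong_iff_dvd_diff two_m algebra_simps)
    finally show ?thesis
      using \<open>N mod 4 = 3\<close> \<open>int N mod 4 = int (N mod 4)\<close> by (simp add: fibotomic_fixing_exponent_def)
  qed
qed

lemma power_CHAR_power_fibotomic:
  fixes i z :: "'a::field"
  assumes "prime CHAR('a)"
  shows "(i * (z powi s + z powi (- s))) ^ (CHAR('a) ^ k)
    = i ^ (CHAR('a) ^ k) * (z powi (s * (CHAR('a) ^ k)) + z powi (- (s * (CHAR('a) ^ k))))"
  by (simp add: freshmans_dream'[OF assms refl] power_mult_distrib power_int_power')

definition fibotomic_orbit_length :: "nat \<Rightarrow> nat \<Rightarrow> nat \<Rightarrow> bool" where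
  "fibotomic_orbit_length m p t \<longleftrightarrow> 0 < t \<and> fibotomic_fixing_exponent m (int p ^ t) \<and>
     (\<forall>j. 0 < j \<and> j < t \<longrightarrow> \<not> fibotomic_fixing_exponent m (int p ^ j))"

lemma min_poly_degree_fibotomic:
  fixes i z :: "'a::field"
  assumes "prime CHAR('a)" "odd CHAR('a)" "prim_root_unity 4 i" "prim_root_unity (2*m) z"
    and "m > 0" "coprime s (int m)" and "fibotomic_orbit_length m CHAR('a) t"
  shows "min_poly_degree (i * (z powi s + z powi (- s))) = t"
proof -
  have "(i * (z powi s + z powi (- s))) ^ (CHAR('a) ^ d) = i * (z powi s + z powi (- s))
      \<longleftrightarrow> fibotomic_fixing_exponent m (int CHAR('a) ^ d)" for d
    using power_CHAR_power_fibotomic[OF assms(1), of i z s d]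
      fibotomic_conjugate_eq_iff[of "CHAR('a) ^ d", OF _ assms(3-6)] assms(2)
    by simp
  then show ?thesis
    using assms(7) unfolding fibotomic_orbit_length_def
    by (intro min_poly_degree_eq_orbit_length[OF assms(1)]) auto
qed

section \<open>The length of the orbit\<close>

lemma cong_int_power_one_iff_ord_dvd:
  "[int a ^ d = 1] (mod int n) \<longleftrightarrow> ord n a dvd d"
  by (metis cong_int_iff of_nat_1 of_nat_power ord_divides)

lemma odd_power_mod_4:
  assumes "odd p"
  shows "int p ^ d mod 4 = (if p mod 4 = 3 \<and> odd d then 3 else 1)"
proof -
  have "int p mod 4 = int (p mod 4)" by (simp add: of_nat_mod)
  moreover have "p mod 4 = 1 \<or> p mod 4 = 3" using assms by presburger
  ultimately consider "p mod 4 = 1" "[int p = 1] (mod 4)" | "p mod 4 = 3" "[int p = -1] (mod 4)"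
    by (auto simp: cong_def)
  then show ?thesis
  proof cases
    case 1
    then show ?thesis using cong_pow[of "int p" 1 4 d] by (simp add: cong_def)
  next
    case 2
    then show ?thesis using cong_pow[of "int p" "-1" 4 d] by (auto simp: cong_def)
  qed
qed

lemma square_cong_one_if_fibotomic_fixing_exponent:
  assumes "fibotomic_fixing_exponent m N"
  shows "[N ^ 2 = 1] (mod int (2*m))"
proof -
  have sq: "[(int m + c) ^ 2 = 1] (mod int (2*m))" if "c = 1 \<or> c = -1" "even (int m)" for c
  proof -
    obtain k where "int m = 2 * k" using \<open>even (int m)\<close> by blast
    then have "(int m + c) ^ 2 - 1 = int (2*m) * (k + c)"
      using that(1) by (auto simp: power2_eq_square algebra_simps)
    then show ?thesis by (simp add: cong_iff_dvd_diff)
  qed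
  have "even (int m)" if "N mod 4 = 3" "[N = int m + c] (mod int (2*m))" "c = 1 \<or> c = -1" for c
  proof -
    have "[N = int m + c] (mod 2)" using that(2) by (rule cong_dvd_modulus) simp
    then show ?thesis using that(1,3) by (auto simp: cong_def) presburger+
  qed
  then show ?thesis
    using assms sq[of 1] sq[of "-1"] cong_pow[of N _ "int (2*m)" 2]
    unfolding fibotomic_fixing_exponent_def
    by (metis (no_types, opaque_lifting) cong_trans diff_conv_add_uminus power2_eq_1_iff
        power_one)
qed

lemma ord_dvd_double_if_fibotomic_fixing_exponent:
  assumes "fibotomic_fixing_exponent m (int p ^ d)"
  shows "ord (2*m) p dvd 2 * d"
  using square_cong_one_if_fibotomic_fixing_exponent[OF assms]
  by (metis cong_int_power_one_iff_ord_dvd power_mult mult.commute)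

lemma fibotomic_fixing_exponent_cong_one_iff:
  assumes "m \<ge> 3" and "[N = 1] (mod int (2*m))"
  shows "fibotomic_fixing_exponent m N \<longleftrightarrow> N mod 4 = 1"
proof -
  have "\<not> [1 = int m + c] (mod int (2*m))" if "c = 1 \<or> c = -1" for c
  proof
    assume "[1 = int m + c] (mod int (2*m))"
    then have "int (2*m) dvd int m + c - 1" by (simp add: cong_iff_dvd_diff dvd_diff_commute)
    moreover have "0 < int m + c - 1" "int m + c - 1 < int (2*m)" using assms(1) that by auto
    ultimately show False by (meson zdvd_not_zless)
  qed
  then show ?thesis
    using assms(2) unfolding fibotomic_fixing_exponent_def
    by (metis cong_sym cong_trans diff_conv_add_uminus)
qed

lemma dvd_less_double_imp_eq:
  fixes a n :: nat
  assumes "a dvd n" "0 < n" "n < 2 * a"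
  shows "n = a"
proof -
  obtain k where n: "n = a * k" using assms(1) by blast
  then have "0 < k" "k < 2" using assms(2,3) by auto
  then show ?thesis using n by (simp add: less_2_cases_iff)
qed

lemma fibotomic_orbit_length_half_ord:
  fixes p m :: nat
  defines "u \<equiv> ord (2*m) p"
  assumes "odd p" and "coprime p m"
    and "(p mod 4 = 1 \<and> even u \<and> [int p ^ (u div 2) = -1] (mod int (2*m))) \<or>
      (p mod 4 = 3 \<and> u mod 4 = 0 \<and> [int p ^ (u div 2) = -1] (mod int (2*m))) \<or>
      (p mod 4 = 3 \<and> u mod 4 = 2 \<and> ([int p ^ (u div 2) = int m + 1] (mod int (2*m)) \<or>
                                       [int p ^ (u div 2) = int m - 1] (mod int (2*m))))"
  shows "fibotomic_orbit_length m p (u div 2)"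
proof -
  have "u > 0" using assms(2,3) by (simp add: u_def ord_eq_0 coprime_commute)
  have "u mod 4 = 0 \<or> u mod 4 = 2 \<Longrightarrow> even u" by presburger
  then have "even u" using assms(4) by auto
  moreover have "odd (u div 2) \<longleftrightarrow> u mod 4 = 2" using \<open>even u\<close> by presburger
  ultimately have "fibotomic_fixing_exponent m (int p ^ (u div 2))"
    using assms(4) odd_power_mod_4[OF \<open>odd p\<close>, of "u div 2"]
    unfolding fibotomic_fixing_exponent_def by auto
  moreover have "\<not> fibotomic_fixing_exponent m (int p ^ j)" if "0 < j" "j < u div 2" for j
  proof
    assume "fibotomic_fixing_exponent m (int p ^ j)"
    then have "u dvd 2 * j" unfolding u_def by (rule ord_dvd_double_if_fibotomic_fixing_exponent)
    then have "u \<le> 2 * j" using \<open>0 < j\<close> by (simp add: dvd_imp_le)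
    with \<open>j < u div 2\<close> show False by presburger
  qed
  ultimately show ?thesis
    using \<open>u > 0\<close> \<open>even u\<close> unfolding fibotomic_orbit_length_def by auto
qed

lemma fibotomic_orbit_length_ord:
  fixes p m :: nat
  defines "u \<equiv> ord (2*m) p"
  assumes "odd p" and "coprime p m" and "m \<ge> 3"
    and "(p mod 4 = 1 \<and> even u \<and> \<not> [int p ^ (u div 2) = -1] (mod int (2*m))) \<or>
      (p mod 4 = 1 \<and> odd u) \<or>
      (p mod 4 = 3 \<and> u mod 4 = 0 \<and> \<not> [int p ^ (u div 2) = -1] (mod int (2*m))) \<or>
      (p mod 4 = 3 \<and> u mod 4 = 2 \<and> \<not> ([int p ^ (u div 2) = int m + 1] (mod int (2*m)) \<or>
                                       [int p ^ (u div 2) = int m - 1] (mod int (2*m))))"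
  shows "fibotomic_orbit_length m p u"
proof -
  have "u > 0" using assms(2,3) by (simp add: u_def ord_eq_0 coprime_commute)
  have one: "[int p ^ j = 1] (mod int (2*m)) \<longleftrightarrow> u dvd j" for j
    unfolding u_def by (rule cong_int_power_one_iff_ord_dvd)
  have "u mod 4 = 0 \<or> u mod 4 = 2 \<Longrightarrow> even u" by presburger
  then have "\<not> (p mod 4 = 3 \<and> odd u)" using assms(5) by auto
  then have "fibotomic_fixing_exponent m (int p ^ u)"
    using fibotomic_fixing_exponent_cong_one_iff[OF \<open>m \<ge> 3\<close>] one odd_power_mod_4[OF \<open>odd p\<close>]
    by simp
  moreover have "\<not> fibotomic_fixing_exponent m (int p ^ j)" if "0 < j" "j < u" for j
  proof
    assume fixing: "fibotomic_fixing_exponent m (int p ^ j)"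
    then have "u dvd 2 * j" unfolding u_def by (rule ord_dvd_double_if_fibotomic_fixing_exponent)
    then have "u = 2 * j" using dvd_less_double_imp_eq[of u "2 * j"] that by simp
    then have "j = u div 2" "even u" "u mod 4 = 0 \<longleftrightarrow> even j" "u mod 4 = 2 \<longleftrightarrow> odd j"
      by presburger+
    moreover have "\<not> u dvd j" using that by (auto dest: dvd_imp_le)
    ultimately show False
      using fixing assms(5) one[of j] odd_power_mod_4[OF \<open>odd p\<close>, of j]
      unfolding fibotomic_fixing_exponent_def by auto
  qed
  ultimately show ?thesis
    using \<open>u > 0\<close> unfolding fibotomic_orbit_length_def by auto
qed

lemma fibotomic_orbit_length_double_ord:
  fixes p m :: nat
  defines "u \<equiv> ord (2*m) p"
  assumes "m \<ge> 3" and "p mod 4 = 3" and "odd u"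
  shows "fibotomic_orbit_length m p (2 * u)"
proof -
  have "odd p" using \<open>p mod 4 = 3\<close> by presburger
  have one: "[int p ^ j = 1] (mod int (2*m)) \<longleftrightarrow> u dvd j" for j
    unfolding u_def by (rule cong_int_power_one_iff_ord_dvd)
  have fixing_iff: "fibotomic_fixing_exponent m (int p ^ j) \<longleftrightarrow> even j" if "u dvd j" for j
    using fibotomic_fixing_exponent_cong_one_iff[OF \<open>m \<ge> 3\<close>] one[of j] that
      odd_power_mod_4[OF \<open>odd p\<close>, of j] \<open>p mod 4 = 3\<close> by simp
  have "\<not> fibotomic_fixing_exponent m (int p ^ j)" if "0 < j" "j < 2 * u" for j
  proof
    assume fixing: "fibotomic_fixing_exponent m (int p ^ j)"
    then have "u dvd j * 2"
      unfolding u_def using ord_dvd_double_if_fibotomic_fixing_exponent by (metis mult.commute)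
    then have "u dvd j" using \<open>odd u\<close> by (simp add: coprime_dvd_mult_left_iff)
    then have "j = u" using dvd_less_double_imp_eq that by blast
    then show False using fixing fixing_iff \<open>odd u\<close> by simp
  qed
  moreover have "0 < u" using \<open>odd u\<close> by presburger
  ultimately show ?thesis
    using fixing_iff[of "2 * u"] unfolding fibotomic_orbit_length_def by simp
qed

theorem mainTheorem15:
  fixes p m :: nat and s :: int and z4 z2m :: "'a::field"
  assumes "prime p" and "p > 2" and "m \<ge> 3" and "coprime p m"
    and "CHAR('a) = p" and "is_alg_closure_of_prime_field TYPE('a)"
    and "prim_root_unity 4 z4" and "prim_root_unity (2*m) z2m"
    and "coprime s (int m)"
  defines "u \<equiv> ord (2*m) p"
    and "\<delta> \<equiv> min_poly_degree (z4 * (z2m powi s + z2m powi (-s)))"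
  shows
    "(((p mod 4 = 1 \<and> even u \<and> [int p ^ (u div 2) = -1] (mod int (2*m))) \<or>
      (p mod 4 = 3 \<and> u mod 4 = 0 \<and> [int p ^ (u div 2) = -1] (mod int (2*m))) \<or>
      (p mod 4 = 3 \<and> u mod 4 = 2 \<and> ([int p ^ (u div 2) = int m + 1] (mod int (2*m)) \<or>
                                       [int p ^ (u div 2) = int m - 1] (mod int (2*m)))))
     \<longrightarrow> \<delta> = u div 2) \<and>
    (((p mod 4 = 1 \<and> even u \<and> \<not> [int p ^ (u div 2) = -1] (mod int (2*m))) \<or>
      (p mod 4 = 1 \<and> odd u) \<or>
      (p mod 4 = 3 \<and> u mod 4 = 0 \<and> \<not> [int p ^ (u div 2) = -1] (mod int (2*m))) \<or>
      (p mod 4 = 3 \<and> u mod 4 = 2 \<and> \<not> ([int p ^ (u div 2) = int m + 1] (mod int (2*m)) \<or>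
                                       [int p ^ (u div 2) = int m - 1] (mod int (2*m)))))
     \<longrightarrow> \<delta> = u) \<and>
    ((p mod 4 = 3 \<and> odd u) \<longrightarrow> \<delta> = 2 * u)"
proof -
  have prime: "prime CHAR('a)" using assms(1,5) by simp
  have "odd p" using assms(1,2) prime_odd_nat by blast
  have degree: "\<delta> = t" if "fibotomic_orbit_length m p t" for t
    unfolding \<delta>_def
    using min_poly_degree_fibotomic[OF prime _ assms(7,8) _ assms(9)] that assms(3,5) \<open>odd p\<close>
    by simp
  show ?thesis
    unfolding u_def
    by (intro conjI impI; rule degree)
      (auto intro: fibotomic_orbit_length_half_ord[OF \<open>odd p\<close> assms(4)]
        fibotomic_orbit_length_ord[OF \<open>odd p\<close> assms(4,3)]
        fibotomic_orbit_length_double_ord[OF assms(3)])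
qed

end
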